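(* Let $D$ be any continuous distribution on $\mathbb{R}^d$ whose probability density function depends only on the distance from the origin. Then there is a noisy distribution $\tilde D$ over $\mathbb{R}^d\times\{-1,1\}$ with marginal $D$ that satisfies the Massart noise condition $|\Pr(y=1\mid\vec x)-\Pr(y=-1\mid\vec x)|\ge\beta$ for all $\vec x$, for some parameter $\beta>0$, with Bayes optimal classifier a homogeneous halfspace $\vec w^*$, such that the \textsf{Average} algorithm returns a classifier $\vec w$ with excess error $\mathrm{err}_{\tilde D}(\vec w)-\mathrm{err}_{\tilde D}(\vec w^* )=\Omega\!\left(\frac{\beta(1-\beta)}{1+\beta}\right)$.
   Context: The \textsf{Average} algorithm, given labeled samples $(\vec x^1,y^1),\dots,(\vec x^m,y^m)$, returns the vector $\frac1m\sum_{i=1}^m y^i\vec x^i$, interpreted as the halfspace $\mathrm{sign}(\vec w\cdot\vec x)$; in the statement, $\vec w$ is the expected vector returned, $\mathbb{E}_{(\vec x,y)\sim\tilde D}[y\vec x]$. $\mathrm{err}_{\tilde D}(\vec w)=\Pr_{(\vec x,y)\sim\tilde D}[\mathrm{sign}(\vec w\cdot\vec x)\ne y]$. *)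

theory Defs
  imports "HOL-Probability.Probability"
begin

text \<open>Euclidean space R^d, with points represented as functions nat => real
  (coordinates 0..d-1, extensional), equipped with Lebesgue measure (product of lborel).\<close>
definition euc :: "nat \<Rightarrow> (nat \<Rightarrow> real) measure" where
  "euc d = PiM {..<d} (\<lambda>_. lborel)"

definition ip :: "nat \<Rightarrow> (nat \<Rightarrow> real) \<Rightarrow> (nat \<Rightarrow> real) \<Rightarrow> real" where
  "ip d w x = (\<Sum>i<d. w i * x i)"

definition enorm :: "nat \<Rightarrow> (nat \<Rightarrow> real) \<Rightarrow> real" where
  "enorm d x = sqrt (\<Sum>i<d. (x i)^2)"

definition radial_continuous_dist :: "nat \<Rightarrow> (nat \<Rightarrow> real) measure \<Rightarrow> bool" where
  "radial_continuous_dist d D \<longleftrightarrow> prob_space D \<and>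
     (\<exists>f g. f \<in> borel_measurable (euc d) \<and>
            (\<forall>x\<in>space (euc d). f x = g (enorm d x)) \<and>
            D = density (euc d) f)"

definition noisy_dist :: "(nat \<Rightarrow> real) measure \<Rightarrow> ((nat \<Rightarrow> real) \<Rightarrow> real)
     \<Rightarrow> ((nat \<Rightarrow> real) \<times> real) measure" where
  "noisy_dist D \<eta> = density (D \<Otimes>\<^sub>M count_space {-1, 1::real})
      (\<lambda>(x, y). ennreal (if y = 1 then \<eta> x else 1 - \<eta> x))"

definition err :: "((nat \<Rightarrow> real) \<times> real) measure \<Rightarrow> ((nat \<Rightarrow> real) \<Rightarrow> real) \<Rightarrow> real" where
  "err N h = measure N {p \<in> space N. h (fst p) \<noteq> snd p}"

definition hs_err :: "nat \<Rightarrow> ((nat \<Rightarrow> real) \<times> real) measure \<Rightarrow> (nat \<Rightarrow> real) \<Rightarrow> real" where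
  "hs_err d N w = err N (\<lambda>x. sgn (ip d w x))"

text \<open>Expected output of the Average algorithm: E[y x].\<close>
definition average_vec :: "nat \<Rightarrow> ((nat \<Rightarrow> real) \<times> real) measure \<Rightarrow> (nat \<Rightarrow> real)" where
  "average_vec d N = (\<lambda>i. if i < d then (\<integral>p. snd p * fst p i \<partial>N) else 0)"

end

theory Submission
  imports Defs
begin

text \<open>Label \<open>x\<close> by the sign of \<open>x 0\<close>, flipped with probability \<open>(1 - \<beta>) / 2\<close> except on the two
  quadrants where \<open>x 0 * x 1 > 0\<close>, where it is never flipped. The first axis is then Bayes optimal,
  but the noiseless quadrants tilt the correlation vector: by the reflection and swap symmetries of a
  radial distribution, \<open>E[y x] = A ((1 + \<beta>) e\<^sub>0 + (1 - \<beta>) e\<^sub>1)\<close> with \<open>A \<ge> 0\<close>. Its halfspace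
  misclassifies the wedge \<open>x 0 \<le> 0 < x 1, - x 0 \<le> r x 1\<close>, \<open>r = (1 - \<beta>) / (1 + \<beta>)\<close>, where the
  noise rate is \<open>(1 - \<beta>) / 2\<close>, losing \<open>\<beta>\<close> on each of its points. Rotations are products of three
  shears, so they preserve Lebesgue measure and hence the radial distribution; since about \<open>5 / r\<close>
  rotated copies of the wedge cover a quadrant, which has mass \<open>1 / 4\<close>, the wedge has mass at
  least \<open>r / 20\<close>.\<close>

section \<open>Measure-preserving maps of the plane\<close>

abbreviation lborel2 :: "(real \<times> real) measure" where
  "lborel2 \<equiv> lborel \<Otimes>\<^sub>M lborel"

definition lborel2_preserving :: "(real \<times> real \<Rightarrow> real \<times> real) \<Rightarrow> bool" where
  "lborel2_preserving T \<longleftrightarrow> T \<in> lborel2 \<rightarrow>\<^sub>M lborel2 \<and> distr lborel2 lborel2 T = lborel2"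

lemma lborel2_preserving_comp:
  "lborel2_preserving T \<Longrightarrow> lborel2_preserving S \<Longrightarrow> lborel2_preserving (S \<circ> T)"
  unfolding lborel2_preserving_def by (metis distr_distr measurable_comp)

lemma lborel2_preserving_swap: "lborel2_preserving (\<lambda>(a, b). (b, a))"
  unfolding lborel2_preserving_def
  by (simp add: measurable_pair_swap' lborel_pair.distr_pair_swap[symmetric])

lemma lborel2_preserving_conj_swap:
  assumes "lborel2_preserving T"
  shows "lborel2_preserving (\<lambda>(a, b). prod.swap (T (b, a)))"
proof -
  have "(\<lambda>(a, b). prod.swap (T (b, a))) = (\<lambda>(a, b). (b, a)) \<circ> T \<circ> (\<lambda>(a, b). (b, a))"
    by (simp add: fun_eq_iff case_prod_beta prod.swap_def)
  then show ?thesis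
    using assms by (simp only:) (intro lborel2_preserving_comp lborel2_preserving_swap)
qed

lemma lborel2_preservingI:
  assumes T: "T \<in> lborel2 \<rightarrow>\<^sub>M lborel2"
    and eq: "\<And>A. A \<in> sets lborel2 \<Longrightarrow> (\<integral>\<^sup>+ p. indicator A (T p) \<partial>lborel2) = emeasure lborel2 A"
  shows "lborel2_preserving T"
  unfolding lborel2_preserving_def
proof (intro conjI T measure_eqI)
  fix A assume "A \<in> sets (distr lborel2 lborel2 T)"
  then have A: "A \<in> sets lborel2" by simp
  have "emeasure (distr lborel2 lborel2 T) A = (\<integral>\<^sup>+ p. indicator A p \<partial>distr lborel2 lborel2 T)"
    using A by simp
  also have "\<dots> = (\<integral>\<^sup>+ p. indicator A (T p) \<partial>lborel2)"
    using A T by (intro nn_integral_distr) auto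
  finally show "emeasure (distr lborel2 lborel2 T) A = emeasure lborel2 A"
    using eq[OF A] by simp
qed simp

text \<open>Fubini reduces this to the translation and reflection invariance of \<open>lborel\<close>.\<close>
lemma lborel2_preserving_affine_fst:
  assumes c: "\<bar>c\<bar> = 1"
  shows "lborel2_preserving (\<lambda>(a, b). (c * a + t * b, b))"
proof (rule lborel2_preservingI)
  show T: "(\<lambda>(a, b). (c * a + t * b, b)) \<in> lborel2 \<rightarrow>\<^sub>M lborel2" by measurable
  fix A assume A: "A \<in> sets lborel2"
  have "(\<integral>\<^sup>+ p. indicator A ((\<lambda>(a, b). (c * a + t * b, b)) p) \<partial>lborel2)
      = (\<integral>\<^sup>+ b. (\<integral>\<^sup>+ a. indicator A (c * a + t * b, b) \<partial>lborel) \<partial>lborel)"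
    using A by (subst lborel_pair.nn_integral_snd[symmetric]) (auto simp: case_prod_beta')
  also have "\<dots> = (\<integral>\<^sup>+ b. (\<integral>\<^sup>+ a. indicator A (a, b) \<partial>lborel) \<partial>lborel)"
  proof (rule nn_integral_cong)
    fix b :: real
    have "(\<lambda>a. indicator A (a, b) :: ennreal) \<in> borel_measurable borel"
      using A by measurable
    from nn_integral_real_affine[OF this, of c "t * b"] c
    show "(\<integral>\<^sup>+ a. indicator A (c * a + t * b, b) \<partial>lborel) = (\<integral>\<^sup>+ a. indicator A (a, b) \<partial>lborel)"
      by (simp add: add.commute)
  qed
  also have "\<dots> = emeasure lborel2 A"
    using A by (subst lborel_pair.nn_integral_snd) auto
  finally show "(\<integral>\<^sup>+ p. indicator A ((\<lambda>(a, b). (c * a + t * b, b)) p) \<partial>lborel2) = emeasure lborel2 A" .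
qed

lemma lborel2_preserving_affine_snd:
  "\<bar>c\<bar> = 1 \<Longrightarrow> lborel2_preserving (\<lambda>(a, b). (a, c * b + t * a))"
  using lborel2_preserving_conj_swap[OF lborel2_preserving_affine_fst, of c t]
  by (simp add: case_prod_beta')

text \<open>A rotation is a product of three shears.\<close>
lemma lborel2_preserving_rotation:
  assumes cs: "c\<^sup>2 + s\<^sup>2 = 1"
  shows "lborel2_preserving (\<lambda>(a, b). (c * a + s * b, c * b - s * a))"
proof (cases "s = 0")
  case True
  then have "\<bar>c\<bar> = 1" using cs by (simp add: abs_square_eq_1)
  moreover have "(\<lambda>(a, b). (c * a + s * b, c * b - s * a)) =
      (\<lambda>(a, b). (c * a + 0 * b, b)) \<circ> (\<lambda>(a, b). (a, c * b + 0 * a))"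
    using True by auto
  ultimately show ?thesis
    by (simp only:) (intro lborel2_preserving_comp lborel2_preserving_affine_fst lborel2_preserving_affine_snd)
next
  case False
  define t where "t = (c - 1) / s"
  have ts: "t * s = c - 1" using False by (simp add: t_def)
  have tts: "2 * t + t * t * s = - s"
  proof -
    have "2 * t + t * t * s = 2 * t + t * (t * s)" by (simp add: mult.assoc)
    also have "\<dots> = t * (c + 1)" unfolding ts by (simp add: algebra_simps)
    also have "\<dots> = (c * c - 1) / s" by (simp add: t_def algebra_simps)
    also have "\<dots> = - s" using cs False by (simp add: power2_eq_square field_simps)
    finally show ?thesis .
  qed
  have "(\<lambda>(a, b). (c * a + s * b, c * b - s * a)) =
      (\<lambda>(a, b). (1 * a + (- t) * b, b)) \<circ> (\<lambda>(a, b). (a, 1 * b + (- s) * a)) \<circ> (\<lambda>(a, b). (1 * a + (- t) * b, b))"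
  proof (rule ext, clarsimp)
    fix a b :: real
    have "a - t * b - t * (b - s * (a - t * b)) = a * (1 + t * s) - b * (2 * t + t * t * s)"
      by (simp add: algebra_simps)
    moreover have "b - s * (a - t * b) = b * (1 + t * s) - s * a"
      by (simp add: algebra_simps)
    ultimately show "c * a + s * b = a - t * b - t * (b - s * (a - t * b)) \<and> c * b - s * a = b - s * (a - t * b)"
      using ts tts by simp
  qed
  then show ?thesis
    by (simp only:) (intro lborel2_preserving_comp lborel2_preserving_affine_fst lborel2_preserving_affine_snd; simp)
qed

definition planar_symmetry :: "(real \<times> real \<Rightarrow> real \<times> real) \<Rightarrow> bool" where
  "planar_symmetry T \<longleftrightarrow> lborel2_preserving T \<and> (\<forall>p. norm (T p) = norm p)"

definition rotation2 :: "real \<Rightarrow> real \<times> real \<Rightarrow> real \<times> real" where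
  "rotation2 \<alpha> = (\<lambda>(a, b). (cos \<alpha> * a + sin \<alpha> * b, cos \<alpha> * b - sin \<alpha> * a))"

lemma planar_symmetry_rotation2: "planar_symmetry (rotation2 \<alpha>)"
proof -
  have "(cos \<alpha> * a + sin \<alpha> * b)\<^sup>2 + (cos \<alpha> * b - sin \<alpha> * a)\<^sup>2 = a\<^sup>2 + b\<^sup>2" for a b
    using sin_cos_squared_add[of \<alpha>] by algebra
  then show ?thesis
    unfolding planar_symmetry_def rotation2_def
    by (auto simp: norm_Pair lborel2_preserving_rotation)
qed

lemma planar_symmetry_reflection:
  assumes "\<bar>s\<bar> = 1" "\<bar>t\<bar> = 1"
  shows "planar_symmetry (\<lambda>(a, b). (s * a, t * b))"
proof -
  have "(\<lambda>(a, b). (s * a, t * b)) = (\<lambda>(a, b). (s * a + 0 * b, b)) \<circ> (\<lambda>(a, b). (a, t * b + 0 * a))"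
    by auto
  then have "lborel2_preserving (\<lambda>(a, b). (s * a, t * b))"
    using assms by (simp only:) (intro lborel2_preserving_comp lborel2_preserving_affine_fst lborel2_preserving_affine_snd)
  then show ?thesis
    using assms by (auto simp: planar_symmetry_def norm_Pair abs_mult)
qed

lemma planar_symmetry_swap: "planar_symmetry (\<lambda>(a, b). (b, a))"
  by (auto simp: planar_symmetry_def lborel2_preserving_swap norm_Pair add.commute)

section \<open>Planar maps acting on two coordinates of \<open>euc d\<close>\<close>

definition plane_map :: "nat \<Rightarrow> nat \<Rightarrow> (real \<times> real \<Rightarrow> real \<times> real) \<Rightarrow> (nat \<Rightarrow> real) \<Rightarrow> nat \<Rightarrow> real" where
  "plane_map j k T x = x(j := fst (T (x j, x k)), k := snd (T (x j, x k)))"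

lemma plane_map_fun_upd:
  "j \<noteq> k \<Longrightarrow> plane_map j k T (z(j := a, k := b)) = z(j := fst (T (a, b)), k := snd (T (a, b)))"
  by (simp add: plane_map_def fun_upd_twist)

lemma space_euc: "space (euc d) = (\<Pi>\<^sub>E i\<in>{..<d}. UNIV)"
  by (simp add: euc_def space_PiM)

lemma euc_coordinate_measurable[measurable]: "i < d \<Longrightarrow> (\<lambda>x. x i) \<in> borel_measurable (euc d)"
  unfolding euc_def by (simp add: measurable_lborel2[symmetric] measurable_component_singleton)

lemma fun_upd_in_space_euc: "x \<in> space (euc d) \<Longrightarrow> i < d \<Longrightarrow> x(i := v) \<in> space (euc d)"
  by (auto simp: space_euc PiE_def extensional_def)

lemma plane_map_in_space_euc:
  "x \<in> space (euc d) \<Longrightarrow> j < d \<Longrightarrow> k < d \<Longrightarrow> plane_map j k T x \<in> space (euc d)"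
  by (simp add: plane_map_def fun_upd_in_space_euc)

lemma measurable_plane_map:
  assumes jk: "j < d" "k < d" and T: "T \<in> lborel2 \<rightarrow>\<^sub>M lborel2"
  shows "plane_map j k T \<in> euc d \<rightarrow>\<^sub>M euc d"
proof -
  have "(\<lambda>x. (x j, x k)) \<in> euc d \<rightarrow>\<^sub>M lborel2"
    using jk by measurable
  then have TT: "(\<lambda>x. T (x j, x k)) \<in> euc d \<rightarrow>\<^sub>M lborel2"
    using T by measurable
  have fst_T: "(\<lambda>x. fst (T (x j, x k))) \<in> borel_measurable (euc d)"
    using measurable_compose[OF TT measurable_fst] by (simp add: measurable_lborel2)
  have snd_T: "(\<lambda>x. snd (T (x j, x k))) \<in> borel_measurable (euc d)"
    using measurable_compose[OF TT measurable_snd] by (simp add: measurable_lborel2)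
  show ?thesis
    unfolding euc_def
  proof (rule measurable_PiM_single')
    fix i assume "i \<in> {..<d}"
    then have "(\<lambda>x. plane_map j k T x i) \<in> borel_measurable (euc d)"
      using fst_T snd_T by (cases "i = k"; cases "i = j") (simp_all add: plane_map_def)
    then show "(\<lambda>x. plane_map j k T x i) \<in> PiM {..<d} (\<lambda>_. lborel) \<rightarrow>\<^sub>M lborel"
      by (simp add: measurable_lborel2 euc_def)
  qed (use jk in \<open>auto simp: space_PiM plane_map_def PiE_def extensional_def\<close>)
qed

lemma nn_integral_PiM_insert2:
  fixes R :: "nat set"
  assumes R: "finite R" "j \<notin> R" "k \<notin> insert j R"
    and f: "f \<in> borel_measurable (PiM (insert k (insert j R)) (\<lambda>_. lborel :: real measure))"
  shows "integral\<^sup>N (PiM (insert k (insert j R)) (\<lambda>_. lborel)) f =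
    (\<integral>\<^sup>+ z. (\<integral>\<^sup>+ p. f (z(j := fst p, k := snd p)) \<partial>lborel2) \<partial>PiM R (\<lambda>_. lborel))"
proof -
  interpret product_sigma_finite "\<lambda>_ :: nat. lborel :: real measure" by standard
  have "integral\<^sup>N (PiM (insert k (insert j R)) (\<lambda>_. lborel)) f =
      (\<integral>\<^sup>+ x. (\<integral>\<^sup>+ b. f (x(k := b)) \<partial>lborel) \<partial>PiM (insert j R) (\<lambda>_. lborel))"
    using R f by (simp add: product_nn_integral_insert)
  also have "\<dots> = (\<integral>\<^sup>+ z. (\<integral>\<^sup>+ a. (\<integral>\<^sup>+ b. f (z(j := a, k := b)) \<partial>lborel) \<partial>lborel) \<partial>PiM R (\<lambda>_. lborel))"
    using R f by (subst product_nn_integral_insert) auto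
  also have "\<dots> = (\<integral>\<^sup>+ z. (\<integral>\<^sup>+ p. f (z(j := fst p, k := snd p)) \<partial>lborel2) \<partial>PiM R (\<lambda>_. lborel))"
  proof (rule nn_integral_cong)
    fix z assume "z \<in> space (PiM R (\<lambda>_. lborel :: real measure))"
    then have "(\<lambda>p. f (z(j := fst p, k := snd p))) \<in> borel_measurable lborel2"
      using R f by measurable
    from lborel.nn_integral_fst[OF this]
    show "(\<integral>\<^sup>+ a. (\<integral>\<^sup>+ b. f (z(j := a, k := b)) \<partial>lborel) \<partial>lborel) =
        (\<integral>\<^sup>+ p. f (z(j := fst p, k := snd p)) \<partial>lborel2)"
      by simp
  qed
  finally show ?thesis .
qed

lemma nn_integral_plane_map:
  assumes T: "lborel2_preserving T" and jk: "j < d" "k < d" "j \<noteq> k"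
    and f: "f \<in> borel_measurable (euc d)"
  shows "(\<integral>\<^sup>+ x. f (plane_map j k T x) \<partial>euc d) = integral\<^sup>N (euc d) f"
proof -
  define R where "R = {..<d} - {j, k}"
  have R: "finite R" "j \<notin> R" "k \<notin> insert j R" and dR: "{..<d} = insert k (insert j R)"
    using jk by (auto simp: R_def)
  have Tm: "T \<in> lborel2 \<rightarrow>\<^sub>M lborel2" and Td: "distr lborel2 lborel2 T = lborel2"
    using T by (auto simp: lborel2_preserving_def)
  have f': "f \<in> borel_measurable (PiM (insert k (insert j R)) (\<lambda>_. lborel))"
    using f by (simp add: euc_def dR)
  have "(\<lambda>x. f (plane_map j k T x)) \<in> borel_measurable (euc d)"
    using measurable_plane_map[OF jk(1,2) Tm] f by measurable
  then have "(\<integral>\<^sup>+ x. f (plane_map j k T x) \<partial>euc d) =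
      (\<integral>\<^sup>+ z. (\<integral>\<^sup>+ p. f (plane_map j k T (z(j := fst p, k := snd p))) \<partial>lborel2) \<partial>PiM R (\<lambda>_. lborel))"
    using nn_integral_PiM_insert2[OF R] by (simp add: euc_def dR)
  also have "\<dots> = (\<integral>\<^sup>+ z. (\<integral>\<^sup>+ p. f (z(j := fst p, k := snd p)) \<partial>lborel2) \<partial>PiM R (\<lambda>_. lborel))"
  proof (rule nn_integral_cong)
    fix z assume "z \<in> space (PiM R (\<lambda>_. lborel :: real measure))"
    then have fz: "(\<lambda>p. f (z(j := fst p, k := snd p))) \<in> borel_measurable lborel2"
      using R f' by measurable
    have "(\<integral>\<^sup>+ p. f (plane_map j k T (z(j := fst p, k := snd p))) \<partial>lborel2) =
        (\<integral>\<^sup>+ p. f (z(j := fst p, k := snd p)) \<partial>distr lborel2 lborel2 T)"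
      using fz Tm by (simp add: plane_map_fun_upd[OF jk(3)] nn_integral_distr)
    then show "(\<integral>\<^sup>+ p. f (plane_map j k T (z(j := fst p, k := snd p))) \<partial>lborel2) =
        (\<integral>\<^sup>+ p. f (z(j := fst p, k := snd p)) \<partial>lborel2)"
      by (simp add: Td)
  qed
  also have "\<dots> = integral\<^sup>N (euc d) f"
    using nn_integral_PiM_insert2[OF R f'] by (simp add: euc_def dR)
  finally show ?thesis .
qed

lemma enorm_plane_map:
  assumes jk: "j < d" "k < d" "j \<noteq> k" and T: "\<And>p. norm (T p) = norm p"
  shows "enorm d (plane_map j k T x) = enorm d x"
proof -
  define R where "R = {..<d} - {j, k}"
  have R: "finite R" "j \<notin> R" "k \<notin> insert j R" and dR: "{..<d} = insert k (insert j R)"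
    using jk by (auto simp: R_def)
  have split: "(\<Sum>i<d. (y i)\<^sup>2) = ((y j)\<^sup>2 + (y k)\<^sup>2) + (\<Sum>i\<in>R. (y i)\<^sup>2)" for y :: "nat \<Rightarrow> real"
    unfolding dR using R by (simp add: algebra_simps)
  have "(fst q)\<^sup>2 + (snd q)\<^sup>2 = (norm q)\<^sup>2" for q :: "real \<times> real"
    by (cases q) (simp add: norm_Pair)
  then have "(fst (T p))\<^sup>2 + (snd (T p))\<^sup>2 = (fst p)\<^sup>2 + (snd p)\<^sup>2" for p
    by (simp add: T)
  from this[of "(x j, x k)"]
  have "(plane_map j k T x j)\<^sup>2 + (plane_map j k T x k)\<^sup>2 = (x j)\<^sup>2 + (x k)\<^sup>2"
    using jk by (simp add: plane_map_def)
  moreover have "(\<Sum>i\<in>R. (plane_map j k T x i)\<^sup>2) = (\<Sum>i\<in>R. (x i)\<^sup>2)"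
    using R by (intro sum.cong) (auto simp: plane_map_def)
  ultimately show ?thesis
    unfolding enorm_def split by simp
qed

lemma coordinate_hyperplane_null:
  assumes i: "i < d"
  shows "{x \<in> space (euc d). x i = 0} \<in> null_sets (euc d)"
proof -
  interpret product_sigma_finite "\<lambda>_ :: nat. lborel :: real measure" by standard
  define R where "R = {..<d} - {i}"
  have R: "finite R" "i \<notin> R" and dR: "{..<d} = insert i R"
    using i by (auto simp: R_def)
  define Z where "Z = {x \<in> space (euc d). x i = 0}"
  have Z: "Z \<in> sets (PiM (insert i R) (\<lambda>_. lborel))"
    unfolding Z_def dR[symmetric] euc_def[symmetric] using i by measurable
  have "emeasure (euc d) Z = (\<integral>\<^sup>+ z. (\<integral>\<^sup>+ y. indicator Z (z(i := y)) \<partial>lborel) \<partial>PiM R (\<lambda>_. lborel))"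
    using Z R by (simp add: euc_def dR product_nn_integral_insert flip: nn_integral_indicator)
  also have "\<dots> = (\<integral>\<^sup>+ z. (\<integral>\<^sup>+ y. indicator {0 :: real} y \<partial>lborel) \<partial>PiM R (\<lambda>_. lborel :: real measure))"
  proof (intro nn_integral_cong)
    fix z y assume "z \<in> space (PiM R (\<lambda>_. lborel :: real measure))"
    then have "z(i := y) \<in> space (euc d)"
      by (auto simp: space_euc dR space_PiM PiE_def extensional_def)
    then show "indicator Z (z(i := y)) = (indicator {0} y :: ennreal)"
      by (auto simp: Z_def indicator_def)
  qed
  finally show ?thesis
    using Z by (simp add: Z_def null_sets_def euc_def dR)
qed

section \<open>Error and correlation under label noise\<close>

definition cond_err :: "((nat \<Rightarrow> real) \<Rightarrow> real) \<Rightarrow> ((nat \<Rightarrow> real) \<Rightarrow> real) \<Rightarrow> (nat \<Rightarrow> real) \<Rightarrow> real" where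
  "cond_err \<eta> h x = (if h x \<noteq> 1 then \<eta> x else 0) + (if h x \<noteq> -1 then 1 - \<eta> x else 0)"

lemma min_le_cond_err: "min (\<eta> x) (1 - \<eta> x) \<le> cond_err \<eta> h x"
  by (auto simp: cond_err_def)

context
  fixes D :: "(nat \<Rightarrow> real) measure" and \<eta> :: "(nat \<Rightarrow> real) \<Rightarrow> real"
  assumes D: "prob_space D"
    and \<eta>: "\<eta> \<in> borel_measurable D" and \<eta>_01: "\<And>x. 0 \<le> \<eta> x \<and> \<eta> x \<le> 1"
begin

interpretation D: prob_space D by (rule D)

interpretation label: pair_sigma_finite D "count_space {-1, 1 :: real}"
  by (intro pair_sigma_finite.intro D.sigma_finite_measure_axioms sigma_finite_measure_count_space_finite) simp

lemma measurable_label[measurable]: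
  "snd \<in> borel_measurable (D \<Otimes>\<^sub>M count_space {-1, 1 :: real})"
  by (rule measurable_compose[OF measurable_snd]) simp

lemma measurable_label_prob:
  "(\<lambda>p. if snd p = 1 then \<eta> (fst p) else 1 - \<eta> (fst p)) \<in> borel_measurable (D \<Otimes>\<^sub>M count_space {-1, 1})"
  using \<eta> by measurable

lemma noisy_dist_eq:
  "noisy_dist D \<eta> = density (D \<Otimes>\<^sub>M count_space {-1, 1})
     (\<lambda>p. ennreal (if snd p = 1 then \<eta> (fst p) else 1 - \<eta> (fst p)))"
  by (simp add: noisy_dist_def case_prod_beta')

lemma err_noisy_dist:
  assumes h: "h \<in> borel_measurable D"
  shows "err (noisy_dist D \<eta>) h = (\<integral>x. cond_err \<eta> h x \<partial>D)"
proof -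
  let ?C = "count_space {-1, 1 :: real}"
  let ?w = "\<lambda>p. ennreal (if snd p = 1 then \<eta> (fst p) else 1 - \<eta> (fst p))"
  define S where "S = {p \<in> space (D \<Otimes>\<^sub>M ?C). h (fst p) \<noteq> snd p}"
  have S: "S \<in> sets (D \<Otimes>\<^sub>M ?C)"
    unfolding S_def using h by measurable
  have cond_err: "cond_err \<eta> h x = (\<Sum>y\<in>{-1, 1}. (if y = 1 then \<eta> x else 1 - \<eta> x) * indicator {y. h x \<noteq> y} y)" for x
    by (simp add: cond_err_def indicator_def)
  have "emeasure (noisy_dist D \<eta>) S = (\<integral>\<^sup>+ p. ?w p * indicator S p \<partial>(D \<Otimes>\<^sub>M ?C))"
    unfolding noisy_dist_eq by (rule emeasure_density) (use S \<eta> in measurable)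
  also have "\<dots> = (\<integral>\<^sup>+ x. (\<integral>\<^sup>+ y. ?w (x, y) * indicator S (x, y) \<partial>?C) \<partial>D)"
  proof -
    have "(\<lambda>p. ?w p * indicator S p) \<in> borel_measurable (D \<Otimes>\<^sub>M ?C)"
      using S \<eta> by measurable
    from label.M2.nn_integral_fst[OF this] show ?thesis by simp
  qed
  also have "\<dots> = (\<integral>\<^sup>+ x. ennreal (cond_err \<eta> h x) \<partial>D)"
  proof (rule nn_integral_cong)
    fix x assume "x \<in> space D"
    then have "?w (x, y) * indicator S (x, y) =
        ennreal ((if y = 1 then \<eta> x else 1 - \<eta> x) * indicator {y. h x \<noteq> y} y)" if "y \<in> {-1, 1}" for y
      using that \<eta>_01[of x] by (auto simp: S_def space_pair_measure indicator_def)
    then show "(\<integral>\<^sup>+ y. ?w (x, y) * indicator S (x, y) \<partial>?C) = ennreal (cond_err \<eta> h x)"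
      using \<eta>_01[of x] by (simp add: nn_integral_count_space_finite cond_err ennreal_plus del: ennreal_plus_if)
  qed
  finally have "emeasure (noisy_dist D \<eta>) S = (\<integral>\<^sup>+ x. ennreal (cond_err \<eta> h x) \<partial>D)" .
  moreover have "(\<integral>x. cond_err \<eta> h x \<partial>D) = enn2real (\<integral>\<^sup>+ x. ennreal (cond_err \<eta> h x) \<partial>D)"
    using \<eta> h \<eta>_01 by (intro integral_eq_nn_integral AE_I2) (auto simp: cond_err_def)
  moreover have "err (noisy_dist D \<eta>) h = measure (noisy_dist D \<eta>) S"
    by (simp add: err_def S_def noisy_dist_def)
  ultimately show ?thesis
    by (simp add: measure_def)
qed

lemma average_vec_noisy_dist:
  assumes i: "i < d" and int: "integrable D (\<lambda>x. x i)"
  shows "average_vec d (noisy_dist D \<eta>) i = (\<integral>x. (2 * \<eta> x - 1) * x i \<partial>D)"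
proof -
  let ?C = "count_space {-1, 1 :: real}"
  let ?w = "\<lambda>p. if snd p = 1 then \<eta> (fst p) else 1 - \<eta> (fst p)"
  have xi[measurable]: "(\<lambda>x. x i) \<in> borel_measurable D"
    using int by auto
  have expand: "(\<integral>y. f y \<partial>?C) = f (-1) + f 1" for f :: "real \<Rightarrow> real"
    by (simp add: lebesgue_integral_count_space_finite)
  have "average_vec d (noisy_dist D \<eta>) i = (\<integral>p. snd p * fst p i \<partial>noisy_dist D \<eta>)"
    using i by (simp add: average_vec_def)
  also have "\<dots> = (\<integral>p. ?w p * (snd p * fst p i) \<partial>(D \<Otimes>\<^sub>M ?C))"
    unfolding noisy_dist_eq
  proof (subst integral_density)
    show "(\<lambda>p. snd p * fst p i) \<in> borel_measurable (D \<Otimes>\<^sub>M ?C)" by measurable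
  qed (use measurable_label_prob \<eta>_01 in auto)
  also have "\<dots> = (\<integral>x. (\<integral>y. ?w (x, y) * (y * x i) \<partial>?C) \<partial>D)"
  proof -
    have "integrable (D \<Otimes>\<^sub>M ?C) (\<lambda>p. ?w p * (snd p * fst p i))"
    proof (rule label.Fubini_integrable)
      show "(\<lambda>p. ?w p * (snd p * fst p i)) \<in> borel_measurable (D \<Otimes>\<^sub>M ?C)"
        using \<eta> by measurable
      have "(\<integral>y. norm (?w (x, y) * (y * x i)) \<partial>?C) = \<bar>x i\<bar>" for x
        using \<eta>_01[of x] by (simp add: expand abs_mult algebra_simps)
      then show "integrable D (\<lambda>x. \<integral>y. norm (?w (x, y) * (snd (x, y) * fst (x, y) i)) \<partial>?C)"
        using int by simp
    qed (simp add: integrable_count_space)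
    from label.integral_fst'[OF this] show ?thesis by simp
  qed
  also have "\<dots> = (\<integral>x. (2 * \<eta> x - 1) * x i \<partial>D)"
    by (simp add: expand algebra_simps)
  finally show ?thesis .
qed
end

section \<open>Symmetries of radial distributions\<close>

locale radial_dist =
  fixes d :: nat and D :: "(nat \<Rightarrow> real) measure"
    and f :: "(nat \<Rightarrow> real) \<Rightarrow> ennreal" and g :: "real \<Rightarrow> ennreal"
  assumes prob: "prob_space D"
    and f_measurable: "f \<in> borel_measurable (euc d)"
    and f_radial: "\<forall>x\<in>space (euc d). f x = g (enorm d x)"
    and D_eq: "D = density (euc d) f"
begin

sublocale prob_space D by (rule prob)

lemma sets_D[simp, measurable_cong]: "sets D = sets (euc d)"
  and space_D[simp]: "space D = space (euc d)"
  by (simp_all add: D_eq)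

lemma borel_measurable_D: "borel_measurable D = borel_measurable (euc d)"
  by (rule measurable_cong_sets) auto

lemma AE_coordinate_nonzero:
  assumes "i < d"
  shows "AE x in D. x i \<noteq> 0"
proof -
  have "{x \<in> space D. x i = 0} \<in> null_sets D"
    unfolding D_eq using coordinate_hyperplane_null[OF assms] f_measurable
    by (subst null_sets_density_iff) (auto dest: AE_not_in)
  from AE_not_in[OF this] AE_space show ?thesis
    by eventually_elim auto
qed

text \<open>The density is radial and Lebesgue measure is invariant, so \<open>D\<close> is too.\<close>
lemma distr_plane_map:
  assumes T: "planar_symmetry T" and jk: "j < d" "k < d" "j \<noteq> k"
  shows "distr D D (plane_map j k T) = D"
proof (rule measure_eqI)
  have T_pres: "lborel2_preserving T" and T_norm: "\<And>p. norm (T p) = norm p"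
    using T by (auto simp: planar_symmetry_def)
  have pm: "plane_map j k T \<in> euc d \<rightarrow>\<^sub>M euc d"
    using T_pres jk by (intro measurable_plane_map) (auto simp: lborel2_preserving_def)
  fix A assume "A \<in> sets (distr D D (plane_map j k T))"
  then have A[measurable]: "A \<in> sets (euc d)" by simp
  have "emeasure (distr D D (plane_map j k T)) A
      = (\<integral>\<^sup>+ x. f x * indicator (plane_map j k T -` A \<inter> space (euc d)) x \<partial>euc d)"
    using pm f_measurable by (simp add: D_eq emeasure_distr emeasure_density measurable_sets)
  also have "\<dots> = (\<integral>\<^sup>+ x. (\<lambda>y. f y * indicator A y) (plane_map j k T x) \<partial>euc d)"
    using f_radial enorm_plane_map[OF jk T_norm] plane_map_in_space_euc[OF _ jk(1,2)]
    by (intro nn_integral_cong) (auto simp: indicator_def)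
  also have "\<dots> = (\<integral>\<^sup>+ y. f y * indicator A y \<partial>euc d)"
    using f_measurable A
    by (intro nn_integral_plane_map[OF T_pres jk] borel_measurable_times_ennreal borel_measurable_indicator)
  also have "\<dots> = emeasure D A"
    using f_measurable by (simp add: D_eq emeasure_density)
  finally show "emeasure (distr D D (plane_map j k T)) A = emeasure D A" .
qed simp

lemma measurable_plane_map_D:
  "planar_symmetry T \<Longrightarrow> j < d \<Longrightarrow> k < d \<Longrightarrow> plane_map j k T \<in> D \<rightarrow>\<^sub>M D"
  using measurable_plane_map[of j d k T]
  by (simp add: planar_symmetry_def lborel2_preserving_def D_eq)

lemma integral_plane_map:
  fixes F :: "(nat \<Rightarrow> real) \<Rightarrow> real"
  assumes "planar_symmetry T" "j < d" "k < d" "j \<noteq> k" "F \<in> borel_measurable (euc d)"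
  shows "(\<integral>x. F (plane_map j k T x) \<partial>D) = (\<integral>x. F x \<partial>D)"
  using integral_distr[OF measurable_plane_map_D, of T j k F] assms
  by (simp add: distr_plane_map borel_measurable_D)

lemma measure_plane_map_vimage:
  assumes "planar_symmetry T" "j < d" "k < d" "j \<noteq> k" "A \<in> sets (euc d)"
  shows "measure D (plane_map j k T -` A \<inter> space (euc d)) = measure D A"
  using measure_distr[OF measurable_plane_map_D, of T j k A] assms
  by (simp add: distr_plane_map)

lemma integral_flip_coordinate:
  fixes F :: "(nat \<Rightarrow> real) \<Rightarrow> real"
  assumes d: "2 \<le> d" and k: "k < d" and F: "F \<in> borel_measurable (euc d)"
  shows "(\<integral>x. F (x(k := - x k)) \<partial>D) = (\<integral>x. F x \<partial>D)"
proof -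
  define j where "j = (if k = 0 then 1 else 0 :: nat)"
  have j: "j < d" "j \<noteq> k" using d by (auto simp: j_def)
  have "plane_map j k (\<lambda>(a, b). (1 * a, -1 * b)) x = x(k := - x k)" for x
    using j by (simp add: plane_map_def)
  then show ?thesis
    using integral_plane_map[OF planar_symmetry_reflection j(1) k j(2) F, of 1 "-1"] by simp
qed

lemma integral_odd_in_coordinate:
  fixes F :: "(nat \<Rightarrow> real) \<Rightarrow> real"
  assumes "2 \<le> d" "k < d" "F \<in> borel_measurable (euc d)" and odd: "\<And>x. F (x(k := - x k)) = - F x"
  shows "(\<integral>x. F x \<partial>D) = 0"
  using integral_flip_coordinate[OF assms(1-3)] by (simp add: odd)

lemma integral_swap_coordinates:
  fixes F :: "(nat \<Rightarrow> real) \<Rightarrow> real"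
  assumes "j < d" "k < d" "j \<noteq> k" "F \<in> borel_measurable (euc d)"
  shows "(\<integral>x. F (x(j := x k, k := x j)) \<partial>D) = (\<integral>x. F x \<partial>D)"
  using integral_plane_map[OF planar_symmetry_swap assms] by (simp add: plane_map_def)

end

section \<open>The mass of a thin wedge\<close>

definition wedge :: "nat \<Rightarrow> real \<Rightarrow> (nat \<Rightarrow> real) set" where
  "wedge d r = {x \<in> space (euc d). x 0 \<le> 0 \<and> 0 < x 1 \<and> 0 \<le> x 0 + r * x 1}"

lemma wedge_sets: "1 < d \<Longrightarrow> wedge d r \<in> sets (euc d)"
  unfolding wedge_def by measurable

lemma polar_first_quadrant:
  fixes u v :: real
  assumes u: "0 < u" and v: "0 < v"
  obtains \<rho> \<phi> where "0 < \<rho>" "0 < \<phi>" "\<phi> < pi / 2" "u = \<rho> * cos \<phi>" "v = \<rho> * sin \<phi>"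
proof -
  define \<phi> where "\<phi> = arctan (v / u)"
  have \<phi>: "0 < \<phi>" "\<phi> < pi / 2"
    using u v arctan_ubound by (simp_all add: \<phi>_def)
  have cos_\<phi>: "0 < cos \<phi>"
    using \<phi> by (intro cos_gt_zero_pi) auto
  have "v = u * tan \<phi>"
    using u by (simp add: \<phi>_def tan_arctan)
  then show ?thesis
    using that[of "u / cos \<phi>" \<phi>] u \<phi> cos_\<phi> by (simp add: tan_def)
qed

text \<open>Write \<open>(u, v)\<close> in polar coordinates with angle \<open>\<phi>\<close>; rotating back by the largest multiple
  of \<open>arctan r\<close> below \<open>\<phi>\<close> leaves an angle in \<open>[0, arctan r]\<close>, i.e. a point of the wedge.\<close>
lemma rotation_into_wedge:
  fixes r u v :: real
  assumes r: "0 < r" "r \<le> 1" and u: "0 < u" and v: "0 < v"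
  obtains j :: nat where "j < nat \<lceil>pi / (2 * arctan r)\<rceil>"
    and "0 \<le> cos (j * arctan r) * v - sin (j * arctan r) * u"
    and "0 < cos (j * arctan r) * u + sin (j * arctan r) * v"
    and "cos (j * arctan r) * v - sin (j * arctan r) * u \<le> r * (cos (j * arctan r) * u + sin (j * arctan r) * v)"
proof -
  define \<theta> where "\<theta> = arctan r"
  have \<theta>: "0 < \<theta>" "\<theta> \<le> pi / 4"
    using r arctan_le_iff[of r 1] by (simp_all add: \<theta>_def arctan_one)
  obtain \<rho> \<phi> where \<rho>: "0 < \<rho>" and \<phi>: "0 < \<phi>" "\<phi> < pi / 2"
    and polar: "u = \<rho> * cos \<phi>" "v = \<rho> * sin \<phi>"
    using polar_first_quadrant[OF u v] by blast
  define j where "j = nat \<lfloor>\<phi> / \<theta>\<rfloor>"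
  have j: "real j = of_int \<lfloor>\<phi> / \<theta>\<rfloor>"
    using \<phi> \<theta> by (simp add: j_def)
  define \<psi> where "\<psi> = \<phi> - j * \<theta>"
  have \<psi>: "0 \<le> \<psi>" "\<psi> \<le> \<theta>"
  proof -
    have "real j \<le> \<phi> / \<theta>" "\<phi> / \<theta> < real j + 1"
      using j by linarith+
    then show "0 \<le> \<psi>" "\<psi> \<le> \<theta>"
      using \<theta> by (simp_all add: \<psi>_def field_simps)
  qed
  have sin_\<psi>: "0 \<le> sin \<psi>" and cos_\<psi>: "0 < cos \<psi>"
    using \<psi> \<theta> pi_gt_zero by (auto intro!: sin_ge_zero cos_gt_zero_pi)
  have tan_\<psi>: "sin \<psi> \<le> r * cos \<psi>"
  proof -
    have "tan \<psi> \<le> tan \<theta>"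
      using \<psi> \<theta> pi_gt_zero by (intro tan_mono_le) linarith+
    then have "tan \<psi> \<le> r" by (simp add: \<theta>_def tan_arctan)
    then show ?thesis
      using cos_\<psi> by (simp add: tan_def divide_le_eq mult.commute)
  qed
  have rot_v: "cos (j * \<theta>) * v - sin (j * \<theta>) * u = \<rho> * sin \<psi>"
    and rot_u: "cos (j * \<theta>) * u + sin (j * \<theta>) * v = \<rho> * cos \<psi>"
    unfolding polar \<psi>_def by (simp_all add: sin_diff cos_diff algebra_simps)
  show ?thesis
  proof (rule that)
    have "\<phi> / \<theta> < pi / (2 * \<theta>)"
      using \<phi> \<theta> by (simp add: divide_strict_right_mono field_simps)
    then show "j < nat \<lceil>pi / (2 * arctan r)\<rceil>"
      using j \<phi> \<theta> unfolding \<theta>_def by linarith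
    show "0 \<le> cos (j * arctan r) * v - sin (j * arctan r) * u"
      unfolding \<theta>_def[symmetric] rot_v using \<rho> sin_\<psi> by simp
    show "0 < cos (j * arctan r) * u + sin (j * arctan r) * v"
      unfolding \<theta>_def[symmetric] rot_u using \<rho> cos_\<psi> by simp
    show "cos (j * arctan r) * v - sin (j * arctan r) * u \<le> r * (cos (j * arctan r) * u + sin (j * arctan r) * v)"
      unfolding \<theta>_def[symmetric] rot_u rot_v using \<rho> tan_\<psi> by (simp add: mult_left_mono algebra_simps)
  qed
qed

lemma nat_ceiling_pi_div_arctan_le:
  fixes r :: real
  assumes r: "0 < r" "r \<le> 1"
  shows "real (nat \<lceil>pi / (2 * arctan r)\<rceil>) \<le> 5 / r"
proof -
  define \<theta> where "\<theta> = arctan r"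
  have "1 + r\<^sup>2 \<le> 2\<^sup>2"
    using r power_le_one[of r 2] by simp
  then have "sqrt (1 + r\<^sup>2) \<le> 2"
    by (metis abs_numeral real_sqrt_abs real_sqrt_le_iff)
  then have "r / 2 \<le> r / sqrt (1 + r\<^sup>2)"
    using r by (intro divide_left_mono) (auto simp: add_pos_nonneg)
  also have "\<dots> = sin \<theta>" by (simp add: \<theta>_def sin_arctan)
  also have "\<dots> \<le> \<theta>" using r by (intro sin_x_le_x) (simp add: \<theta>_def)
  finally have "pi / (2 * \<theta>) \<le> pi / r"
    using r by (intro divide_left_mono) auto
  moreover have "real (nat \<lceil>pi / (2 * \<theta>)\<rceil>) \<le> pi / (2 * \<theta>) + 1"
    using r by (simp add: \<theta>_def of_int_ceiling_le_add_one)
  moreover have "pi / r \<le> 4 / r" "1 \<le> 1 / r"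
    using r pi_less_4 by (simp_all add: divide_right_mono)
  ultimately show ?thesis unfolding \<theta>_def by linarith
qed

lemma quadrant_subset_rotated_wedges:
  assumes d: "1 < d" and r: "0 < r" "r \<le> 1"
  shows "{x \<in> space (euc d). x 0 < 0 \<and> 0 < x 1} \<subseteq>
    (\<Union>j<nat \<lceil>pi / (2 * arctan r)\<rceil>. plane_map 0 1 (rotation2 (j * arctan r)) -` wedge d r \<inter> space (euc d))"
proof safe
  fix x assume x: "x \<in> space (euc d)" "x 0 < 0" "0 < x 1"
  then obtain j where j: "j < nat \<lceil>pi / (2 * arctan r)\<rceil>"
    and h: "0 \<le> cos (j * arctan r) * - x 0 - sin (j * arctan r) * x 1"
      "0 < cos (j * arctan r) * x 1 + sin (j * arctan r) * - x 0"
      "cos (j * arctan r) * - x 0 - sin (j * arctan r) * x 1 \<le>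
       r * (cos (j * arctan r) * x 1 + sin (j * arctan r) * - x 0)"
    using rotation_into_wedge[OF r, of "x 1" "- x 0"] by auto
  define y where "y = plane_map 0 1 (rotation2 (j * arctan r)) x"
  have y: "y 0 = cos (j * arctan r) * x 0 + sin (j * arctan r) * x 1"
    "y 1 = cos (j * arctan r) * x 1 - sin (j * arctan r) * x 0"
    by (simp_all add: y_def plane_map_def rotation2_def)
  have "y 0 \<le> 0" "0 < y 1" "0 \<le> y 0 + r * y 1"
    using h unfolding y by (simp_all add: algebra_simps)
  then have "y \<in> wedge d r"
    using x d by (simp add: wedge_def y_def plane_map_in_space_euc)
  with j x show "x \<in> (\<Union>j<nat \<lceil>pi / (2 * arctan r)\<rceil>. plane_map 0 1 (rotation2 (j * arctan r)) -` wedge d r \<inter> space (euc d))"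
    by (auto simp: y_def)
qed

context radial_dist
begin

lemma measure_quadrant_ge:
  assumes d: "2 \<le> d"
  shows "1 / 4 \<le> measure D {x \<in> space (euc d). x 0 < 0 \<and> 0 < x 1}"
proof -
  define Q where "Q st = {x \<in> space (euc d). 0 < fst st * x 0 \<and> 0 < snd st * x 1}" for st :: "real \<times> real"
  define S where "S = {-1, 1 :: real} \<times> {-1, 1 :: real}"
  have d01[simp]: "0 < d" "1 < d" "Suc 0 < d"
    using d by simp_all
  have Q_sets: "Q st \<in> sets (euc d)" for st
    unfolding Q_def by measurable
  have Q_eq: "measure D (Q st) = measure D (Q (-1, 1))" if "st \<in> S" for st
  proof -
    let ?T = "\<lambda>(a, b). (- fst st * a, snd st * b)"
    have "plane_map 0 1 ?T -` Q (-1, 1) \<inter> space (euc d) = Q st"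
      by (auto simp: Q_def plane_map_def fun_upd_in_space_euc)
    moreover have "planar_symmetry ?T"
      using that by (intro planar_symmetry_reflection) (auto simp: S_def)
    ultimately show ?thesis
      using measure_plane_map_vimage[of ?T 0 1 "Q (-1, 1)"] Q_sets by simp
  qed
  have "AE x in D. x \<in> (\<Union>st\<in>S. Q st) \<longleftrightarrow> x \<in> space D"
  proof -
    have in_Q: "x \<in> Q (sgn (x 0), sgn (x 1))" if "x \<in> space D" "x 0 \<noteq> 0" "x 1 \<noteq> 0" for x
      using that by (simp add: Q_def sgn_if)
    have in_S: "(sgn (x 0), sgn (x 1)) \<in> S" if "x 0 \<noteq> 0" "x 1 \<noteq> 0" for x
      using that by (simp add: S_def sgn_if)
    show ?thesis
      using AE_coordinate_nonzero[OF d01(1)] AE_coordinate_nonzero[OF d01(2)]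
    proof eventually_elim
      fix x :: "nat \<Rightarrow> real" assume "x 0 \<noteq> 0" "x 1 \<noteq> 0"
      then show "x \<in> (\<Union>st\<in>S. Q st) \<longleftrightarrow> x \<in> space D"
        using in_Q[of x] in_S[of x] by (auto simp: Q_def intro: bexI[of _ "(sgn (x 0), sgn (x 1))"])
    qed
  qed
  then have "1 = measure D (\<Union>st\<in>S. Q st)"
    using Q_sets prob_space by (subst measure_eq_AE) (auto simp: S_def)
  also have "\<dots> \<le> (\<Sum>st\<in>S. measure D (Q st))"
    using Q_sets by (intro measure_UNION_le) (simp_all add: S_def)
  also have "\<dots> = card S * measure D (Q (-1, 1))"
    using Q_eq by simp
  also have "card S = 4"
    by (simp add: S_def card_cartesian_product)
  finally show ?thesis
    by (simp add: Q_def)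
qed

text \<open>About \<open>5 / r\<close> rotated copies of the wedge cover the quadrant.\<close>
lemma measure_wedge_ge:
  assumes d: "2 \<le> d" and r: "0 < r" "r \<le> 1"
  shows "r / 20 \<le> measure D (wedge d r)"
proof -
  define n where "n = nat \<lceil>pi / (2 * arctan r)\<rceil>"
  define B where "B j = plane_map 0 1 (rotation2 (j * arctan r)) -` wedge d r \<inter> space (euc d)" for j :: nat
  have W: "wedge d r \<in> sets (euc d)"
    using d by (simp add: wedge_sets)
  have B: "B j \<in> sets D" for j
    unfolding B_def using measurable_plane_map_D[OF planar_symmetry_rotation2, of 0 1] d W
    by (auto intro: measurable_sets)
  have "{x \<in> space (euc d). x 0 < 0 \<and> 0 < x 1} \<subseteq> (\<Union>j<n. B j)"
    using quadrant_subset_rotated_wedges[OF _ r, of d] d unfolding B_def n_def by simp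
  then have "measure D {x \<in> space (euc d). x 0 < 0 \<and> 0 < x 1} \<le> measure D (\<Union>j<n. B j)"
    using B by (intro finite_measure_mono) auto
  then have "1 / 4 \<le> measure D (\<Union>j<n. B j)"
    using measure_quadrant_ge[OF d] by linarith
  also have "\<dots> \<le> (\<Sum>j<n. measure D (B j))"
    using B by (intro measure_UNION_le) auto
  also have "\<dots> = n * measure D (wedge d r)"
    using measure_plane_map_vimage[OF planar_symmetry_rotation2, of 0 1 "wedge d r"] d W by (simp add: B_def)
  also have "\<dots> \<le> (5 / r) * measure D (wedge d r)"
    using nat_ceiling_pi_div_arctan_le[OF r] by (intro mult_right_mono) (auto simp: n_def)
  finally show ?thesis
    using r by (simp add: field_simps)
qed

end

section \<open>The noise model\<close>

definition bayes_label :: "(nat \<Rightarrow> real) \<Rightarrow> real" where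
  "bayes_label x = (if 0 < x 0 then 1 else -1)"

definition noise_margin :: "real \<Rightarrow> (nat \<Rightarrow> real) \<Rightarrow> real" where
  "noise_margin \<beta> x = (if 0 < x 0 * x 1 then 1 else \<beta>)"

text \<open>Sending \<open>x 0 = 0\<close> to the label \<open>-1\<close> rather than to \<open>sgn 0 = 0\<close> keeps the Massart
  condition valid at every point.\<close>
definition massart_eta :: "real \<Rightarrow> (nat \<Rightarrow> real) \<Rightarrow> real" where
  "massart_eta \<beta> x = (1 + bayes_label x * noise_margin \<beta> x) / 2"

definition first_axis :: "nat \<Rightarrow> real" where
  "first_axis i = (if i = 0 then 1 else 0)"

lemma ip_first_axis:
  assumes "0 < d"
  shows "ip d first_axis x = x 0"
proof -
  have "(\<Sum>i<d. first_axis i * x i) = (\<Sum>i<d. if i = 0 then x i else 0)"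
    by (intro sum.cong) (auto simp: first_axis_def)
  then show ?thesis
    using assms by (simp add: ip_def)
qed

locale massart_example = radial_dist +
  fixes \<beta> :: real
  assumes two_le_d: "2 \<le> d"
    and coordinate_integrable: "\<And>i. i < d \<Longrightarrow> integrable D (\<lambda>x. x i)"
    and \<beta>_pos: "0 < \<beta>" and \<beta>_le_1: "\<beta> \<le> 1"
begin

lemma d_gt[simp]: "0 < d" "1 < d" "Suc 0 < d"
  using two_le_d by simp_all

lemma massart_eta_measurable: "massart_eta \<beta> \<in> borel_measurable (euc d)"
  unfolding massart_eta_def bayes_label_def noise_margin_def by measurable

lemma massart_eta_bounds: "0 \<le> massart_eta \<beta> x" "massart_eta \<beta> x \<le> 1"
  using \<beta>_pos \<beta>_le_1 by (auto simp: massart_eta_def bayes_label_def noise_margin_def)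

lemma massart_condition: "\<beta> \<le> \<bar>massart_eta \<beta> x - (1 - massart_eta \<beta> x)\<bar>"
  using \<beta>_pos \<beta>_le_1 by (auto simp: massart_eta_def bayes_label_def noise_margin_def)

lemma integrable_bounded_by_coordinate:
  assumes "k < d" "F \<in> borel_measurable (euc d)" "\<And>x. \<bar>F x\<bar> \<le> \<bar>x k\<bar>"
  shows "integrable D F"
proof (rule Bochner_Integration.integrable_bound)
  show "integrable D (\<lambda>x. x k)" using assms(1) by (rule coordinate_integrable)
  show "F \<in> borel_measurable D" using assms(2) by (simp add: borel_measurable_D)
  show "AE x in D. norm (F x) \<le> norm (x k)" using assms(3) by simp
qed

definition quadrant_moment :: real where
  "quadrant_moment = (\<integral>x. (if 0 < x 0 * x 1 then \<bar>x 0\<bar> else 0) \<partial>D)"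

lemma quadrant_moment_nonneg: "0 \<le> quadrant_moment"
  unfolding quadrant_moment_def by (intro integral_nonneg_AE) auto

lemma integral_abs_first_coordinate: "(\<integral>x. \<bar>x 0\<bar> \<partial>D) = 2 * quadrant_moment"
proof -
  let ?Q = "\<lambda>x :: nat \<Rightarrow> real. if 0 < x 0 * x 1 then \<bar>x 0\<bar> else 0"
  let ?Q' = "\<lambda>x :: nat \<Rightarrow> real. if x 0 * x 1 < 0 then \<bar>x 0\<bar> else 0"
  have Q: "integrable D ?Q" and Q': "integrable D ?Q'"
    by (auto intro!: integrable_bounded_by_coordinate[of 0])
  have "(\<integral>x. \<bar>x 0\<bar> \<partial>D) = (\<integral>x. ?Q x + ?Q' x \<partial>D)"
  proof (rule integral_cong_AE)
    show "AE x in D. \<bar>x 0\<bar> = ?Q x + ?Q' x"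
      using AE_coordinate_nonzero[OF d_gt(2)]
      by eventually_elim (auto simp: zero_less_mult_iff mult_less_0_iff)
  qed (simp_all add: borel_measurable_D)
  also have "\<dots> = quadrant_moment + (\<integral>x. ?Q' x \<partial>D)"
    using Q Q' by (simp add: quadrant_moment_def)
  also have "(\<integral>x. ?Q' x \<partial>D) = (\<integral>x. ?Q (x(1 := - x 1)) \<partial>D)"
    by (simp add: mult_less_0_iff zero_less_mult_iff cong: if_cong)
  also have "\<dots> = quadrant_moment"
    unfolding quadrant_moment_def using two_le_d by (intro integral_flip_coordinate) auto
  finally show ?thesis by simp
qed

abbreviation noisy :: "((nat \<Rightarrow> real) \<times> real) measure" where
  "noisy \<equiv> noisy_dist D (massart_eta \<beta>)"

lemma two_massart_eta_minus_1: "2 * massart_eta \<beta> x - 1 = bayes_label x * noise_margin \<beta> x"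
  by (simp add: massart_eta_def field_simps)

lemma average_vec_noisy:
  assumes "i < d"
  shows "average_vec d noisy i = (\<integral>x. bayes_label x * noise_margin \<beta> x * x i \<partial>D)"
proof -
  have "average_vec d noisy i = (\<integral>x. (2 * massart_eta \<beta> x - 1) * x i \<partial>D)"
    using massart_eta_measurable massart_eta_bounds
    by (intro average_vec_noisy_dist[OF prob _ _ assms coordinate_integrable[OF assms]])
      (auto simp: borel_measurable_D)
  then show ?thesis
    by (simp add: two_massart_eta_minus_1)
qed

lemma average_vec_noisy_0: "average_vec d noisy 0 = (1 + \<beta>) * quadrant_moment"
proof -
  let ?Q = "\<lambda>x :: nat \<Rightarrow> real. if 0 < x 0 * x 1 then \<bar>x 0\<bar> else 0"
  have "bayes_label x * noise_margin \<beta> x * x 0 = \<beta> * \<bar>x 0\<bar> + (1 - \<beta>) * ?Q x" for x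
    by (auto simp: bayes_label_def noise_margin_def algebra_simps)
  then have "average_vec d noisy 0 = (\<integral>x. \<beta> * \<bar>x 0\<bar> + (1 - \<beta>) * ?Q x \<partial>D)"
    by (simp add: average_vec_noisy)
  also have "\<dots> = \<beta> * (\<integral>x. \<bar>x 0\<bar> \<partial>D) + (1 - \<beta>) * (\<integral>x. ?Q x \<partial>D)"
    using coordinate_integrable[of 0] integrable_bounded_by_coordinate[of 0 ?Q] by simp
  finally show ?thesis
    by (simp add: integral_abs_first_coordinate quadrant_moment_def algebra_simps)
qed

lemma average_vec_noisy_1: "average_vec d noisy 1 = (1 - \<beta>) * quadrant_moment"
proof -
  let ?Q1 = "\<lambda>x :: nat \<Rightarrow> real. if 0 < x 0 * x 1 then \<bar>x 1\<bar> else 0"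
  have "bayes_label x * noise_margin \<beta> x * x 1 = \<beta> * (bayes_label x * x 1) + (1 - \<beta>) * ?Q1 x" for x
    by (auto simp: bayes_label_def noise_margin_def zero_less_mult_iff algebra_simps)
  moreover have "integrable D (\<lambda>x. bayes_label x * x 1)" "integrable D ?Q1"
    by (auto intro!: integrable_bounded_by_coordinate[of 1] simp: bayes_label_def abs_mult)
  moreover have "(\<integral>x. bayes_label x * x 1 \<partial>D) = 0"
    using two_le_d by (intro integral_odd_in_coordinate) (auto simp: bayes_label_def)
  moreover have "(\<integral>x. ?Q1 x \<partial>D) = quadrant_moment"
  proof -
    have "(\<integral>x. ?Q1 x \<partial>D) = (\<integral>x. (\<lambda>y. if 0 < y 0 * y 1 then \<bar>y 0\<bar> else 0) (x(0 := x 1, 1 := x 0)) \<partial>D)"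
      by (simp add: mult.commute cong: if_cong)
    also have "\<dots> = quadrant_moment"
      unfolding quadrant_moment_def by (intro integral_swap_coordinates) auto
    finally show ?thesis .
  qed
  ultimately show ?thesis
    by (simp add: average_vec_noisy)
qed

lemma average_vec_noisy_ge_2:
  assumes "2 \<le> i" "i < d"
  shows "average_vec d noisy i = 0"
  unfolding average_vec_noisy[OF assms(2)] using assms two_le_d
  by (intro integral_odd_in_coordinate) (auto simp: bayes_label_def noise_margin_def)

lemma ip_average_vec_noisy:
  "ip d (average_vec d noisy) x = quadrant_moment * ((1 + \<beta>) * x 0 + (1 - \<beta>) * x 1)"
proof -
  have "{..<d} = {0, 1} \<union> {2..<d}"
    using two_le_d by auto
  then have "ip d (average_vec d noisy) x =
      average_vec d noisy 0 * x 0 + average_vec d noisy 1 * x 1 + (\<Sum>i\<in>{2..<d}. average_vec d noisy i * x i)"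
    by (simp add: ip_def sum.union_disjoint)
  also have "(\<Sum>i\<in>{2..<d}. average_vec d noisy i * x i) = 0"
    by (simp add: average_vec_noisy_ge_2)
  finally show ?thesis
    unfolding average_vec_noisy_0 average_vec_noisy_1 by (simp add: algebra_simps)
qed

lemma cond_err_integrable:
  assumes "h \<in> borel_measurable (euc d)"
  shows "integrable D (cond_err (massart_eta \<beta>) h)"
proof (rule integrable_const_bound[where B = 1])
  show "cond_err (massart_eta \<beta>) h \<in> borel_measurable D"
    using assms massart_eta_measurable unfolding cond_err_def borel_measurable_D by measurable
  show "AE x in D. norm (cond_err (massart_eta \<beta>) h x) \<le> 1"
    using massart_eta_bounds by (intro AE_I2) (auto simp: cond_err_def)
qed

lemma err_noisy:
  assumes "h \<in> borel_measurable (euc d)"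
  shows "err noisy h = (\<integral>x. cond_err (massart_eta \<beta>) h x \<partial>D)"
  using massart_eta_measurable massart_eta_bounds assms
  by (intro err_noisy_dist[OF prob]) (auto simp: borel_measurable_D)

lemma hs_err_first_axis: "hs_err d noisy first_axis = (\<integral>x. cond_err (massart_eta \<beta>) (\<lambda>x. sgn (x 0)) x \<partial>D)"
  unfolding hs_err_def ip_first_axis[OF d_gt(1)] by (rule err_noisy) measurable

lemma cond_err_first_axis:
  "x 0 \<noteq> 0 \<Longrightarrow> cond_err (massart_eta \<beta>) (\<lambda>x. sgn (x 0)) x = min (massart_eta \<beta> x) (1 - massart_eta \<beta> x)"
  using \<beta>_pos \<beta>_le_1
  by (auto simp: cond_err_def massart_eta_def bayes_label_def noise_margin_def sgn_if min_def field_simps)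

theorem bayes_optimal_first_axis:
  assumes h: "h \<in> borel_measurable (euc d)"
  shows "hs_err d noisy first_axis \<le> err noisy h"
  unfolding hs_err_first_axis err_noisy[OF h]
proof (rule integral_mono_AE)
  show "AE x in D. cond_err (massart_eta \<beta>) (\<lambda>x. sgn (x 0)) x \<le> cond_err (massart_eta \<beta>) h x"
    using AE_coordinate_nonzero[OF d_gt(1)]
    by eventually_elim (simp add: cond_err_first_axis min_le_cond_err)
qed (use h in \<open>measurable, auto intro: cond_err_integrable\<close>)

abbreviation misclassified_wedge :: "(nat \<Rightarrow> real) set" where
  "misclassified_wedge \<equiv> wedge d ((1 - \<beta>) / (1 + \<beta>))"

lemma misclassified_wedge_sets: "misclassified_wedge \<in> sets (euc d)"
  by (simp add: wedge_sets)

text \<open>On the wedge the averaged halfspace predicts \<open>1\<close> where the Bayes label is \<open>-1\<close>,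
  trading the error rate \<open>(1 - \<beta>) / 2\<close> for \<open>(1 + \<beta>) / 2\<close>.\<close>
lemma cond_err_average_ge:
  assumes "x 0 \<noteq> 0"
  shows "cond_err (massart_eta \<beta>) (\<lambda>x. sgn (x 0)) x + \<beta> * indicator misclassified_wedge x
    \<le> cond_err (massart_eta \<beta>) (\<lambda>x. sgn (ip d (average_vec d noisy) x)) x"
proof (cases "x \<in> misclassified_wedge")
  case True
  then have x: "x 0 < 0" "0 < x 1" "0 \<le> x 0 + (1 - \<beta>) / (1 + \<beta>) * x 1"
    using assms by (auto simp: wedge_def)
  then have "0 \<le> (1 + \<beta>) * x 0 + (1 - \<beta>) * x 1"
    using \<beta>_pos by (simp add: field_simps)
  then have "0 \<le> ip d (average_vec d noisy) x"
    using quadrant_moment_nonneg by (simp add: ip_average_vec_noisy)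
  moreover have "x 0 * x 1 < 0"
    using x by (simp add: mult_neg_pos)
  then have "massart_eta \<beta> x = (1 - \<beta>) / 2"
    using x by (simp add: massart_eta_def bayes_label_def noise_margin_def)
  ultimately show ?thesis
    using True x \<beta>_le_1 by (auto simp: cond_err_def sgn_if)
next
  case False
  then show ?thesis
    using assms by (simp add: cond_err_first_axis min_le_cond_err)
qed

lemma excess_error_ge_wedge:
  "\<beta> * measure D misclassified_wedge \<le> hs_err d noisy (average_vec d noisy) - hs_err d noisy first_axis"
proof -
  let ?h = "\<lambda>x. sgn (ip d (average_vec d noisy) x)"
  have h: "?h \<in> borel_measurable (euc d)"
    unfolding ip_average_vec_noisy by measurable
  have integrable_wedge: "integrable D (\<lambda>x. \<beta> * indicator misclassified_wedge x)"
    using misclassified_wedge_sets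
    by (intro integrable_mult_right integrable_real_indicator) (auto simp: less_top[symmetric])
  have "misclassified_wedge \<inter> space D = misclassified_wedge"
    by (auto simp: wedge_def)
  then have "hs_err d noisy first_axis + \<beta> * measure D misclassified_wedge =
      (\<integral>x. cond_err (massart_eta \<beta>) (\<lambda>x. sgn (x 0)) x \<partial>D) + (\<integral>x. \<beta> * indicator misclassified_wedge x \<partial>D)"
    by (simp add: hs_err_first_axis)
  also have "\<dots> = (\<integral>x. cond_err (massart_eta \<beta>) (\<lambda>x. sgn (x 0)) x + \<beta> * indicator misclassified_wedge x \<partial>D)"
    using integrable_wedge cond_err_integrable[of "\<lambda>x. sgn (x 0)"]
    by (intro Bochner_Integration.integral_add[symmetric]) auto
  also have "\<dots> \<le> (\<integral>x. cond_err (massart_eta \<beta>) ?h x \<partial>D)"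
  proof (rule integral_mono_AE)
    show "AE x in D. cond_err (massart_eta \<beta>) (\<lambda>x. sgn (x 0)) x + \<beta> * indicator misclassified_wedge x
        \<le> cond_err (massart_eta \<beta>) ?h x"
      using AE_coordinate_nonzero[OF d_gt(1)] by eventually_elim (rule cond_err_average_ge)
    show "integrable D (\<lambda>x. cond_err (massart_eta \<beta>) (\<lambda>x. sgn (x 0)) x + \<beta> * indicator misclassified_wedge x)"
      using integrable_wedge cond_err_integrable[of "\<lambda>x. sgn (x 0)"] by simp
  qed (use h in \<open>rule cond_err_integrable\<close>)
  also have "\<dots> = hs_err d noisy (average_vec d noisy)"
    unfolding hs_err_def using h by (rule err_noisy[symmetric])
  finally show ?thesis by simp
qed

lemma excess_error_ge:
  "1 / 20 * (\<beta> * (1 - \<beta>) / (1 + \<beta>)) \<le> hs_err d noisy (average_vec d noisy) - hs_err d noisy first_axis"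
proof -
  have "1 / 20 * (\<beta> * (1 - \<beta>) / (1 + \<beta>)) \<le> \<beta> * measure D misclassified_wedge"
  proof (cases "\<beta> = 1")
    case False
    then have "(1 - \<beta>) / (1 + \<beta>) / 20 \<le> measure D misclassified_wedge"
      using \<beta>_pos \<beta>_le_1 two_le_d by (intro measure_wedge_ge) auto
    from mult_left_mono[OF this, of \<beta>] show ?thesis
      using \<beta>_pos by (simp add: ac_simps)
  qed simp
  then show ?thesis
    using excess_error_ge_wedge by linarith
qed

end

theorem theorem5:
  shows "\<exists>c>0. \<forall>d\<ge>2. \<forall>D \<beta>.
     radial_continuous_dist d D \<and> (\<forall>i<d. integrable D (\<lambda>x. x i)) \<and> 0 < \<beta> \<and> \<beta> \<le> 1 \<longrightarrow>
     (\<exists>\<eta> wstar.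
        \<eta> \<in> borel_measurable (euc d) \<and> (\<forall>x. 0 \<le> \<eta> x \<and> \<eta> x \<le> 1) \<and>
        (\<forall>x\<in>space (euc d). \<bar>\<eta> x - (1 - \<eta> x)\<bar> \<ge> \<beta>) \<and>
        (\<forall>h \<in> borel_measurable (euc d). (\<forall>x. h x \<in> {-1, 1}) \<longrightarrow>
            hs_err d (noisy_dist D \<eta>) wstar \<le> err (noisy_dist D \<eta>) h) \<and>
        hs_err d (noisy_dist D \<eta>) (average_vec d (noisy_dist D \<eta>))
          - hs_err d (noisy_dist D \<eta>) wstar \<ge> c * (\<beta> * (1 - \<beta>) / (1 + \<beta>)))"
  apply (intro exI[of _ "1 / 20 :: real"] conjI allI impI)
   apply simp
  subgoal premises assms for d D \<beta>
  proof -
    obtain f g where "massart_example d D f g \<beta>"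
      using assms unfolding radial_continuous_dist_def massart_example_def radial_dist_def
        massart_example_axioms_def by blast
    then interpret massart_example d D f g \<beta> .
    show ?thesis
      using massart_eta_measurable massart_eta_bounds massart_condition
        bayes_optimal_first_axis excess_error_ge
      by (intro exI[of _ "massart_eta \<beta>"] exI[of _ first_axis]) auto
  qed
  done

end
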